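(* With the notation of the context, assume that every distinct affine local piece of $u^*$ on $\Omega$ appears among the sampled functions $u_1,\dots,u_{N_s}$. Define $\varepsilon=\max_{\bm x\in\Omega}\big(\hat f_{\mathrm{L,c}}(\bm x)-\hat f_{\mathrm{L,d}}(\bm x)\big)$. Then for all $\bm x\in\Omega$, $$-\varepsilon\le \hat f_{\mathrm{L,d}}(\bm x)-u^*(\bm x)\le 0\qquad\text{and}\qquad 0\le \hat f_{\mathrm{L,c}}(\bm x)-u^*(\bm x)\le\varepsilon;$$ in particular $\hat f_{\mathrm{L,d}}\le u^*\le\hat f_{\mathrm{L,c}}$ on $\Omega$. Furthermore, if $\varepsilon=0$, then $\hat f_{\mathrm{L,d}}(\bm x)=\hat f_{\mathrm{L,c}}(\bm x)=u^*(\bm x)$ for all $\bm x\in\Omega$.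
   Context: Let $\Omega\subseteq\mathbb{R}^{n_x}$ be a convex polyhedron (a hyperbox) and $u^*:\Omega\to\mathbb{R}$ a continuous piecewise affine (PWA) function: $\Omega$ is the union of finitely many closed convex polyhedra (local regions) with pairwise disjoint interiors, and on each local region $u^*$ coincides with an affine function (its local piece). (In the paper $u^*$ is the first input of the explicit linear MPC law.) A unique order (UO) region is a closed convex polyhedron contained in a local region on whose interior the order of all distinct local pieces of $u^*$ is constant; $\Omega$ is the union of finitely many UO regions. Sample points $\bm x_1,\dots,\bm x_{N_s}\in\Omega$ are given, each in the interior of a UO region $\Gamma(\bm x_i)$, and $u_i$ denotes the local piece of $u^*$ on $\Gamma(\bm x_i)$. Define $J_{\geq,i}=\{j\in\{1,\dots,N_s\}: u_j(\bm x_i)\ge u_i(\bm x_i)\}$, $J_{\leq,i}=\{j\in\{1,\dots,N_s\}: u_j(\bm x_i)\le u_i(\bm x_i)\}$, $\hat f_{\mathrm{L,d}}(\bm x)=\max_{i=1,\dots,N_s}\min_{j\in J_{\geq,i}}u_j(\bm x)$ and $\hat f_{\mathrm{L,c}}(\bm x)=\min_{i=1,\dots,N_s}\max_{j\in J_{\leq,i}}u_j(\bm x)$. *)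

theory Defs
  imports "HOL-Analysis.Analysis"
begin

definition affine_fun :: "('a::euclidean_space \<Rightarrow> real) \<Rightarrow> bool" where
  "affine_fun f \<longleftrightarrow> (\<exists>c b. \<forall>x. f x = c \<bullet> x + b)"

definition pwa_on :: "'a::euclidean_space set \<Rightarrow> ('a \<Rightarrow> real) \<Rightarrow> 'a set set \<Rightarrow> ('a set \<Rightarrow> 'a \<Rightarrow> real) \<Rightarrow> bool" where
  "pwa_on \<Omega> u R pc \<longleftrightarrow>
     finite R \<and> \<Union>R = \<Omega> \<and> (\<forall>r\<in>R. polyhedron r) \<and>
     (\<forall>r\<in>R. \<forall>s\<in>R. r \<noteq> s \<longrightarrow> interior r \<inter> interior s = {}) \<and>
     (\<forall>r\<in>R. affine_fun (pc r) \<and> (\<forall>x\<in>r. u x = pc r x))"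

definition uo_regions :: "'a::euclidean_space set \<Rightarrow> 'a set set \<Rightarrow> ('a set \<Rightarrow> 'a \<Rightarrow> real) \<Rightarrow> 'a set set \<Rightarrow> bool" where
  "uo_regions \<Omega> R pc U \<longleftrightarrow>
     finite U \<and> \<Union>U = \<Omega> \<and>
     (\<forall>G\<in>U. polyhedron G \<and> (\<exists>r\<in>R. G \<subseteq> r) \<and>
        (\<forall>g\<in>pc ` R. \<forall>h\<in>pc ` R. \<forall>x\<in>interior G. \<forall>y\<in>interior G. (g x \<le> h x \<longleftrightarrow> g y \<le> h y)))"

definition Jge :: "nat \<Rightarrow> (nat \<Rightarrow> 'a) \<Rightarrow> (nat \<Rightarrow> 'a \<Rightarrow> real) \<Rightarrow> nat \<Rightarrow> nat set" where
  "Jge N xs us i = {j \<in> {1..N}. us j (xs i) \<ge> us i (xs i)}"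

definition Jle :: "nat \<Rightarrow> (nat \<Rightarrow> 'a) \<Rightarrow> (nat \<Rightarrow> 'a \<Rightarrow> real) \<Rightarrow> nat \<Rightarrow> nat set" where
  "Jle N xs us i = {j \<in> {1..N}. us j (xs i) \<le> us i (xs i)}"

definition fLd :: "nat \<Rightarrow> (nat \<Rightarrow> 'a) \<Rightarrow> (nat \<Rightarrow> 'a \<Rightarrow> real) \<Rightarrow> 'a \<Rightarrow> real" where
  "fLd N xs us x = (MAX i\<in>{1..N}. (MIN j\<in>Jge N xs us i. us j x))"

definition fLc :: "nat \<Rightarrow> (nat \<Rightarrow> 'a) \<Rightarrow> (nat \<Rightarrow> 'a \<Rightarrow> real) \<Rightarrow> 'a \<Rightarrow> real" where
  "fLc N xs us x = (MIN i\<in>{1..N}. (MAX j\<in>Jle N xs us i. us j x))"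

end

theory Submission
  imports Defs
begin

text \<open>Everything rests on a one-dimensional fact: if a continuous F on [0, 1] agrees at every
  point with one of finitely many affine functions, one of them lies above F at 0 and below F at 1.
  Otherwise let t0 < 1 be the last point where some piece \<phi> starting above F lies weakly below F.
  A piece k active just after t0 starts below F (else t0 would not be last) but, by continuity,
  lies above F at t0; so the affine k - \<phi> goes from negative at 0 to nonnegative at t0 and is
  positive beyond t0, whereas there k = F < \<phi>.
  On the segment from a sample point x_i to x this yields a sampled piece u_j with
  u_j(x_i) \<ge> u(x_i) = u_i(x_i), i.e. j \<in> J_{\<ge>,i}, and u_j(x) \<le> u(x); hence fLd \<le> u, and
  dually u \<le> fLc, from which the \<epsilon>-bounds are immediate.\<close>

lemma affine_fun_continuous_on: "affine_fun f \<Longrightarrow> continuous_on S f"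
proof -
  assume "affine_fun f"
  then obtain c b where "f = (\<lambda>x. c \<bullet> x + b)" unfolding affine_fun_def by blast
  then show ?thesis by (simp add: continuous_intros)
qed

lemma affine_fun_uminus: "affine_fun f \<Longrightarrow> affine_fun (\<lambda>x. - f x)"
  unfolding affine_fun_def by (metis inner_minus_left minus_add_distrib)

lemma affine_fun_diff: "affine_fun f \<Longrightarrow> affine_fun g \<Longrightarrow> affine_fun (\<lambda>x. f x - g x)"
  unfolding affine_fun_def by (metis inner_diff_left add_diff_add)

lemma affine_fun_compose_line:
  assumes "affine_fun f"
  shows "affine_fun (\<lambda>t::real. f (y + t *\<^sub>R v))"
proof -
  obtain c b where "\<And>x. f x = c \<bullet> x + b" using assms unfolding affine_fun_def by blast
  then have "\<forall>t. f (y + t *\<^sub>R v) = (c \<bullet> v) \<bullet> t + (c \<bullet> y + b)"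
    by (simp add: inner_add_right algebra_simps)
  then show ?thesis unfolding affine_fun_def by blast
qed

lemma affine_fun_real_pos_beyond:
  fixes \<psi> :: "real \<Rightarrow> real"
  assumes "affine_fun \<psi>" "\<psi> 0 < 0" "0 \<le> \<psi> s" "0 \<le> s" "s < t"
  shows "0 < \<psi> t"
proof -
  obtain c b where \<psi>: "\<And>x. \<psi> x = c * x + b" using assms(1) unfolding affine_fun_def by auto
  have "0 < c * s" using assms(2,3) \<psi>[of 0] \<psi>[of s] by linarith
  then have "0 < c" using assms(4) by (simp add: zero_less_mult_iff)
  then have "c * s < c * t" using assms(5) by simp
  then show ?thesis using assms(3) \<psi>[of s] \<psi>[of t] by linarith
qed

lemma eventually_at_right_active_pieces_above:
  fixes F :: "real \<Rightarrow> real"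
  assumes F: "continuous_on {0..1} F" and "finite P" and P: "\<forall>k\<in>P. continuous_on {0..1} k"
    and "0 \<le> t0" "t0 < 1"
  shows "\<forall>\<^sub>F t in at_right t0. \<forall>k\<in>P. F t = k t \<longrightarrow> F t0 \<le> k t0"
proof -
  have "\<forall>\<^sub>F t in at_right t0. \<forall>k\<in>{k\<in>P. k t0 < F t0}. 0 < F t - k t"
  proof (rule eventually_ball_finite)
    show "finite {k\<in>P. k t0 < F t0}" using \<open>finite P\<close> by simp
    show "\<forall>k\<in>{k\<in>P. k t0 < F t0}. \<forall>\<^sub>F t in at_right t0. 0 < F t - k t"
    proof
      fix k assume k: "k \<in> {k\<in>P. k t0 < F t0}"
      have "continuous_on {t0..1} (\<lambda>t. F t - k t)"
        using F P k \<open>0 \<le> t0\<close> by (auto intro!: continuous_intros intro: continuous_on_subset)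
      then have "((\<lambda>t. F t - k t) \<longlongrightarrow> F t0 - k t0) (at_right t0)"
        using \<open>t0 < 1\<close> by (rule continuous_on_Icc_at_rightD)
      then show "\<forall>\<^sub>F t in at_right t0. 0 < F t - k t"
        by (rule order_tendstoD) (use k in auto)
    qed
  qed
  then show ?thesis by eventually_elim force
qed

lemma piecewise_affine_interval_crossing:
  fixes F :: "real \<Rightarrow> real"
  assumes F: "continuous_on {0..1} F" and "finite P" and aff: "\<forall>\<phi>\<in>P. affine_fun \<phi>"
    and cover: "\<forall>t\<in>{0..1}. \<exists>\<phi>\<in>P. F t = \<phi> t"
  shows "\<exists>\<phi>\<in>P. F 0 \<le> \<phi> 0 \<and> \<phi> 1 \<le> F 1"
proof -
  define A where "A = {\<phi>\<in>P. F 0 \<le> \<phi> 0}"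
  define S where "S = {t\<in>{0..1}. \<exists>\<phi>\<in>A. \<phi> t \<le> F t}"
  have "S = (\<Union>\<phi>\<in>A. {t\<in>{0..1}. \<phi> t \<le> F t})" unfolding S_def by auto
  moreover have "closed {t\<in>{0..1}. \<phi> t \<le> F t}" if "\<phi> \<in> A" for \<phi>
    using that aff F by (intro continuous_on_closed_Collect_le) (auto simp: A_def affine_fun_continuous_on)
  ultimately have "closed S" using \<open>finite P\<close> by (auto simp: A_def)
  moreover have "0 \<in> S" using cover unfolding S_def A_def by force
  moreover have bdd: "bdd_above S" unfolding S_def by (rule bdd_aboveI[of _ 1]) auto
  ultimately have "Sup S \<in> S" by (intro closed_contains_Sup) auto
  then obtain \<phi> where \<phi>: "\<phi> \<in> A" "\<phi> (Sup S) \<le> F (Sup S)" and t0: "Sup S \<in> {0..1}"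
    unfolding S_def by blast
  have beyond: "F t < \<psi> t" if "\<psi> \<in> A" "Sup S < t" "t \<le> 1" for \<psi> t
  proof -
    have "t \<notin> S" using that cSup_upper[OF _ bdd, of t] by fastforce
    moreover have "0 \<le> t" using that cSup_upper[OF \<open>0 \<in> S\<close> bdd] by linarith
    ultimately show ?thesis using that by (auto simp: S_def not_le)
  qed
  show ?thesis
  proof (cases "Sup S = 1")
    case True
    then show ?thesis using \<phi> unfolding A_def by auto
  next
    case False
    with t0 have "Sup S < 1" by simp
    have "\<forall>\<^sub>F t in at_right (Sup S).
        t \<in> {Sup S<..<1} \<and> (\<forall>k\<in>P. F t = k t \<longrightarrow> F (Sup S) \<le> k (Sup S))"
      using aff t0 \<open>Sup S < 1\<close>
      by (intro eventually_conj eventually_at_right_real eventually_at_right_active_pieces_above[OF F \<open>finite P\<close>])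
        (auto simp: affine_fun_continuous_on)
    then obtain t where t: "Sup S < t" "t < 1"
      and above: "\<forall>k\<in>P. F t = k t \<longrightarrow> F (Sup S) \<le> k (Sup S)"
      by (auto dest: eventually_happens'[OF trivial_limit_at_right_real])
    obtain k where k: "k \<in> P" "F t = k t" using cover t t0 by force
    have "k \<notin> A" using beyond[of k t] k t by auto
    then have "k 0 - \<phi> 0 < 0" using k \<phi>(1) unfolding A_def by auto
    moreover have "0 \<le> k (Sup S) - \<phi> (Sup S)" using above k \<phi>(2) by fastforce
    moreover have "affine_fun (\<lambda>x. k x - \<phi> x)" using aff k \<phi>(1) by (auto simp: A_def affine_fun_diff)
    ultimately have "0 < k t - \<phi> t"
      using t t0 by (intro affine_fun_real_pos_beyond[where \<psi>="\<lambda>x. k x - \<phi> x" and s="Sup S"]) auto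
    then show ?thesis using beyond[OF \<phi>(1)] t k by fastforce
  qed
qed

lemma affine_piece_above_then_below:
  fixes u :: "'a::euclidean_space \<Rightarrow> real"
  assumes "convex S" and u: "continuous_on S u" and "finite P" and aff: "\<forall>g\<in>P. affine_fun g"
    and cover: "\<forall>z\<in>S. \<exists>g\<in>P. u z = g z" and "y \<in> S" "x \<in> S"
  shows "\<exists>g\<in>P. u y \<le> g y \<and> g x \<le> u x"
proof -
  define p where "p t = y + t *\<^sub>R (x - y)" for t :: real
  have pS: "p t \<in> S" if "t \<in> {0..1}" for t
  proof -
    have "p t = (1 - t) *\<^sub>R y + t *\<^sub>R x" unfolding p_def by (simp add: algebra_simps)
    then show ?thesis using \<open>convex S\<close> \<open>y \<in> S\<close> \<open>x \<in> S\<close> that unfolding convex_alt by auto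
  qed
  have "continuous_on {0..1} (\<lambda>t. u (p t))"
    unfolding p_def using pS[unfolded p_def]
    by (intro continuous_on_compose2[OF u]) (auto intro!: continuous_intros)
  moreover have "\<forall>\<phi>\<in>(\<lambda>g t. g (p t)) ` P. affine_fun \<phi>"
    using aff unfolding p_def by (auto intro: affine_fun_compose_line)
  moreover have "\<forall>t\<in>{0..1}. \<exists>\<phi>\<in>(\<lambda>g t. g (p t)) ` P. u (p t) = \<phi> t"
    using cover pS by fastforce
  ultimately have "\<exists>\<phi>\<in>(\<lambda>g t. g (p t)) ` P. u (p 0) \<le> \<phi> 0 \<and> \<phi> 1 \<le> u (p 1)"
    using \<open>finite P\<close> by (intro piecewise_affine_interval_crossing) auto
  moreover have "p 0 = y" "p 1 = x" unfolding p_def by auto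
  ultimately show ?thesis by auto
qed

lemma affine_piece_below_then_above:
  fixes u :: "'a::euclidean_space \<Rightarrow> real"
  assumes "convex S" and "continuous_on S u" and "finite P" and "\<forall>g\<in>P. affine_fun g"
    and "\<forall>z\<in>S. \<exists>g\<in>P. u z = g z" and "y \<in> S" "x \<in> S"
  shows "\<exists>g\<in>P. g y \<le> u y \<and> u x \<le> g x"
proof -
  have "\<exists>g\<in>(\<lambda>g x. - g x) ` P. - u y \<le> g y \<and> g x \<le> - u x"
    using assms by (intro affine_piece_above_then_below)
      (auto intro: affine_fun_uminus continuous_intros)
  then show ?thesis by auto
qed

lemma fLd_attained:
  assumes "0 < N"
  shows "\<exists>j\<in>{1..N}. fLd N xs us x = us j x"
proof -
  have "fLd N xs us x \<in> (\<lambda>i. MIN j\<in>Jge N xs us i. us j x) ` {1..N}"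
    unfolding fLd_def using assms by (intro Max_in) auto
  then obtain i where i: "i \<in> {1..N}" "fLd N xs us x = (MIN j\<in>Jge N xs us i. us j x)"
    by blast
  have "i \<in> Jge N xs us i" using i(1) by (simp add: Jge_def)
  then have "(MIN j\<in>Jge N xs us i. us j x) \<in> (\<lambda>j. us j x) ` Jge N xs us i"
    by (intro Min_in) (auto simp: Jge_def)
  then show ?thesis using i by (auto simp: Jge_def)
qed

lemma fLc_attained:
  assumes "0 < N"
  shows "\<exists>j\<in>{1..N}. fLc N xs us x = us j x"
proof -
  have "fLc N xs us x \<in> (\<lambda>i. MAX j\<in>Jle N xs us i. us j x) ` {1..N}"
    unfolding fLc_def using assms by (intro Min_in) auto
  then obtain i where i: "i \<in> {1..N}" "fLc N xs us x = (MAX j\<in>Jle N xs us i. us j x)"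
    by blast
  have "i \<in> Jle N xs us i" using i(1) by (simp add: Jle_def)
  then have "(MAX j\<in>Jle N xs us i. us j x) \<in> (\<lambda>j. us j x) ` Jle N xs us i"
    by (intro Max_in) (auto simp: Jle_def)
  then show ?thesis using i by (auto simp: Jle_def)
qed

lemma bdd_above_fLc_minus_fLd:
  assumes "compact S" and us: "\<forall>j\<in>{1..N}. continuous_on S (us j)"
  shows "bdd_above ((\<lambda>x. fLc N xs us x - fLd N xs us x) ` S)"
proof (cases "N = 0")
  case True
  \<comment> \<open>without samples both are Max/Min of the empty set, hence constant\<close>
  then show ?thesis by (simp add: fLc_def fLd_def image_constant_conv)
next
  case False
  define h where "h x = (\<Sum>j\<in>{1..N}. \<bar>us j x\<bar>)" for x
  have "continuous_on S h" unfolding h_def using us by (intro continuous_intros) auto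
  then have "bounded (h ` S)" using \<open>compact S\<close> by (intro compact_imp_bounded compact_continuous_image)
  then obtain B where B: "\<forall>x\<in>S. \<bar>h x\<bar> \<le> B" unfolding bounded_iff by auto
  have h: "\<bar>us j x\<bar> \<le> h x" if "j \<in> {1..N}" for j x
    unfolding h_def using that by (intro member_le_sum) auto
  have "fLc N xs us x - fLd N xs us x \<le> 2 * B" if "x \<in> S" for x
  proof -
    obtain j j' where "j \<in> {1..N}" "j' \<in> {1..N}"
      "fLc N xs us x = us j x" "fLd N xs us x = us j' x"
      using fLc_attained fLd_attained False by (metis gr0I)
    then show ?thesis using h[of j x] h[of j' x] B that by fastforce
  qed
  then show ?thesis by (intro bdd_aboveI2)
qed

lemma fLd_le:
  fixes u :: "'a::euclidean_space \<Rightarrow> real"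
  assumes "convex S" "continuous_on S u" "finite P" "\<forall>g\<in>P. affine_fun g"
    and cover: "\<forall>z\<in>S. \<exists>g\<in>P. u z = g z" and pieces: "P \<subseteq> us ` {1..N}"
    and samples: "\<forall>i\<in>{1..N}. xs i \<in> S \<and> us i (xs i) = u (xs i)" and "x \<in> S"
  shows "fLd N xs us x \<le> u x"
proof -
  have "{1..N} \<noteq> {}" using cover pieces \<open>x \<in> S\<close> by blast
  moreover have "(MIN j\<in>Jge N xs us i. us j x) \<le> u x" if i: "i \<in> {1..N}" for i
  proof -
    obtain g where g: "g \<in> P" "u (xs i) \<le> g (xs i)" "g x \<le> u x"
      using affine_piece_above_then_below[OF assms(1-5)] samples i \<open>x \<in> S\<close> by blast
    then obtain j where j: "j \<in> Jge N xs us i" "g = us j"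
      using pieces samples i by (force simp: Jge_def)
    then have "(MIN j\<in>Jge N xs us i. us j x) \<le> us j x" by (intro Min_le) (auto simp: Jge_def)
    then show ?thesis using g(3) j(2) by simp
  qed
  ultimately show ?thesis unfolding fLd_def by simp
qed

lemma fLc_ge:
  fixes u :: "'a::euclidean_space \<Rightarrow> real"
  assumes "convex S" "continuous_on S u" "finite P" "\<forall>g\<in>P. affine_fun g"
    and cover: "\<forall>z\<in>S. \<exists>g\<in>P. u z = g z" and pieces: "P \<subseteq> us ` {1..N}"
    and samples: "\<forall>i\<in>{1..N}. xs i \<in> S \<and> us i (xs i) = u (xs i)" and "x \<in> S"
  shows "u x \<le> fLc N xs us x"
proof -
  have "{1..N} \<noteq> {}" using cover pieces \<open>x \<in> S\<close> by blast
  moreover have "u x \<le> (MAX j\<in>Jle N xs us i. us j x)" if i: "i \<in> {1..N}" for i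
  proof -
    obtain g where g: "g \<in> P" "g (xs i) \<le> u (xs i)" "u x \<le> g x"
      using affine_piece_below_then_above[OF assms(1-5)] samples i \<open>x \<in> S\<close> by blast
    then obtain j where j: "j \<in> Jle N xs us i" "g = us j"
      using pieces samples i by (force simp: Jle_def)
    then have "us j x \<le> (MAX j\<in>Jle N xs us i. us j x)" by (intro Max_ge) (auto simp: Jle_def)
    then show ?thesis using g(3) j(2) by simp
  qed
  ultimately show ?thesis unfolding fLc_def by simp
qed

theorem theorem1:
  fixes a b :: "'a::euclidean_space" and u :: "'a \<Rightarrow> real"
    and R :: "'a set set" and pc :: "'a set \<Rightarrow> 'a \<Rightarrow> real" and U :: "'a set set"
    and N :: nat and xs :: "nat \<Rightarrow> 'a" and us :: "nat \<Rightarrow> 'a \<Rightarrow> real"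
  assumes cont: "continuous_on (cbox a b) u"
    and pwa: "pwa_on (cbox a b) u R pc"
    and uo: "uo_regions (cbox a b) R pc U"
    and samples: "\<forall>i\<in>{1..N}. \<exists>G\<in>U. xs i \<in> interior G \<and> (\<exists>r\<in>R. G \<subseteq> r \<and> us i = pc r)"
    and all_pieces: "pc ` R \<subseteq> us ` {1..N}"
  shows "let \<epsilon> = (SUP x\<in>cbox a b. fLc N xs us x - fLd N xs us x) in
     (\<forall>x\<in>cbox a b. - \<epsilon> \<le> fLd N xs us x - u x \<and> fLd N xs us x - u x \<le> 0 \<and>
                   0 \<le> fLc N xs us x - u x \<and> fLc N xs us x - u x \<le> \<epsilon> \<and>
                   fLd N xs us x \<le> u x \<and> u x \<le> fLc N xs us x) \<and>
     (\<epsilon> = 0 \<longrightarrow> (\<forall>x\<in>cbox a b. fLd N xs us x = u x \<and> fLc N xs us x = u x))"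
proof -
  let ?S = "cbox a b"
  have "finite R" and UR: "\<Union>R = ?S" and pieces: "\<forall>r\<in>R. affine_fun (pc r) \<and> (\<forall>x\<in>r. u x = pc r x)"
    using pwa unfolding pwa_on_def by auto
  then have "finite (pc ` R)" and aff: "\<forall>g\<in>pc ` R. affine_fun g"
    and cover: "\<forall>z\<in>?S. \<exists>g\<in>pc ` R. u z = g z"
    by blast+
  have sample_pts: "\<forall>i\<in>{1..N}. xs i \<in> ?S \<and> us i (xs i) = u (xs i)"
  proof
    fix i assume "i \<in> {1..N}"
    then obtain G r where "xs i \<in> interior G" "G \<subseteq> r" and r: "r \<in> R" "us i = pc r"
      using samples by blast
    then have "xs i \<in> r" using interior_subset by blast
    then show "xs i \<in> ?S \<and> us i (xs i) = u (xs i)"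
      using r UR pieces by auto
  qed
  note bounds = fLd_le[OF convex_box(1) cont \<open>finite (pc ` R)\<close> aff cover all_pieces sample_pts]
    fLc_ge[OF convex_box(1) cont \<open>finite (pc ` R)\<close> aff cover all_pieces sample_pts]
  have "\<forall>j\<in>{1..N}. continuous_on ?S (us j)"
    using samples aff by (fastforce intro: affine_fun_continuous_on)
  then have bdd: "bdd_above ((\<lambda>x. fLc N xs us x - fLd N xs us x) ` ?S)"
    by (intro bdd_above_fLc_minus_fLd) auto
  define \<epsilon> where "\<epsilon> = (SUP x\<in>?S. fLc N xs us x - fLd N xs us x)"
  have "fLc N xs us x - fLd N xs us x \<le> \<epsilon>" if "x \<in> ?S" for x
    unfolding \<epsilon>_def using bdd that by (rule cSUP_upper2) auto
  then show ?thesis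
    unfolding Let_def \<epsilon>_def[symmetric] using bounds by (smt (verit))
qed

end
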